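(* Suppose the polymer model with edge weights $R^1,R^2,(Y^1,Y^2)$ possesses the down-right property. Then for all $(m,n)\in\mathbb{Z}_+^2$: (a) $\mathbb{E}[\log Z_{m,n}]=m\,\mathbb{E}[\log R^1]+n\,\mathbb{E}[\log R^2]$; (b) $\mathrm{Var}[\log Z_{m,n}]=-m\,\mathrm{Var}[\log R^1]+n\,\mathrm{Var}[\log R^2]+2\,\mathrm{Cov}(S_N,S_S)$; (c) $\mathrm{Var}[\log Z_{m,n}]=m\,\mathrm{Var}[\log R^1]-n\,\mathrm{Var}[\log R^2]+2\,\mathrm{Cov}(S_E,S_W)$, where \[ S_N=\log Z_{m,n}-\log Z_{0,n}=\sum_{i=1}^m\log R^1_{i,n},\quad S_S=\log Z_{m,0}=\sum_{i=1}^m\log R^1_{i,0}, \] \[ S_E=\log Z_{m,n}-\log Z_{m,0}=\sum_{j=1}^n\log R^2_{m,j},\quad S_W=\log Z_{0,n}=\sum_{j=1}^n\log R^2_{0,j}. \]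
   Context: Polymer model with edge weights $R^1,R^2,(Y^1,Y^2)$: the edges of $\mathbb{Z}_+^2$ carry positive random weights. For $z\in\mathbb{N}^2$, $Y^1_z$ is the weight of the horizontal edge $\{z-(1,0),z\}$ and $Y^2_z$ of the vertical edge $\{z-(0,1),z\}$; the pairs $(Y^1_z,Y^2_z)$ are i.i.d. with the law of $(Y^1,Y^2)$. For $i\in\mathbb{N}$ the edge $\{(i-1,0),(i,0)\}$ carries $R^1_{i,0}$, and for $j\in\mathbb{N}$ the edge $\{(0,j-1),(0,j)\}$ carries $R^2_{0,j}$; these are i.i.d. with laws of $R^1$, resp. $R^2$; the three collections are mutually independent. $Z_x$ is the sum over up-right paths from $(0,0)$ to $x$ of the product of the edge weights along the path, $Z_{0,0}=1$. With $\alpha_1=(1,0)$, $\alpha_2=(0,1)$, define $R^k_x:=Z_x/Z_{x-\alpha_k}$ for $k=1,2$ and all $x$ with $x-\alpha_k\in\mathbb{Z}_+^2$. A down-right path is a sequence $\pi=(\pi_k)_{k\in\mathbb{Z}}$ in $\mathbb{Z}_+^2$ with $\pi_{k+1}-\pi_k\in\{\alpha_1,-\alpha_2\}$. To the edge $\{\pi_{k-1},\pi_k\}$ associate $R^1_{\pi_k}$ if horizontal and $R^2_{\pi_{k-1}}$ if vertical. The model has the down-right property if for every down-right path $\pi$ the associated random variables are independent and each $R^1_{\pi_k}$, resp. $R^2_{\pi_k}$, in the collection is distributed as $R^1$, resp. $R^2$. *)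

theory Defs
  imports "HOL-Probability.Probability"
begin

text \<open>Weight of the horizontal edge entering x = (i,j), i.e. the edge from (i-1,j) to (i,j)
  (only meaningful for i \<ge> 1): boundary weight R1 i if j = 0, else Y1 (i,j).
  Weight of the vertical edge entering (i,j), from (i,j-1) (meaningful for j \<ge> 1):
  boundary weight R2 j if i = 0, else Y2 (i,j).\<close>

definition hw :: "(nat \<times> nat \<Rightarrow> real) \<Rightarrow> (nat \<Rightarrow> real) \<Rightarrow> nat \<times> nat \<Rightarrow> real" where
  "hw Y1 R1 x = (if snd x = 0 then R1 (fst x) else Y1 x)"

definition vw :: "(nat \<times> nat \<Rightarrow> real) \<Rightarrow> (nat \<Rightarrow> real) \<Rightarrow> nat \<times> nat \<Rightarrow> real" where
  "vw Y2 R2 x = (if fst x = 0 then R2 (snd x) else Y2 x)"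

fun pathw :: "(nat \<times> nat \<Rightarrow> real) \<Rightarrow> (nat \<times> nat \<Rightarrow> real) \<Rightarrow> nat \<times> nat \<Rightarrow> bool list \<Rightarrow> real" where
  "pathw h v x [] = 1"
| "pathw h v x (True # s) = h (fst x + 1, snd x) * pathw h v (fst x + 1, snd x) s"
| "pathw h v x (False # s) = v (fst x, snd x + 1) * pathw h v (fst x, snd x + 1) s"

definition uppaths :: "nat \<times> nat \<Rightarrow> bool list set" where
  "uppaths x = {s. length s = fst x + snd x \<and> length (filter id s) = fst x}"

definition Zpf :: "(nat \<times> nat \<Rightarrow> real) \<Rightarrow> (nat \<times> nat \<Rightarrow> real) \<Rightarrow> (nat \<Rightarrow> real) \<Rightarrow> (nat \<Rightarrow> real)
    \<Rightarrow> nat \<times> nat \<Rightarrow> real" where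
  "Zpf Y1 Y2 R1 R2 x = (\<Sum>s\<in>uppaths x. pathw (hw Y1 R1) (vw Y2 R2) (0,0) s)"

definition down_right :: "(int \<Rightarrow> nat \<times> nat) \<Rightarrow> bool" where
  "down_right p \<longleftrightarrow> (\<forall>k. p (k + 1) = (fst (p k) + 1, snd (p k))
       \<or> (fst (p (k + 1)) = fst (p k) \<and> snd (p k) = snd (p (k + 1)) + 1))"

definition horiz_step :: "(int \<Rightarrow> nat \<times> nat) \<Rightarrow> int \<Rightarrow> bool" where
  "horiz_step p k \<longleftrightarrow> p k = (fst (p (k - 1)) + 1, snd (p (k - 1)))"

definition Rone :: "(nat \<times> nat \<Rightarrow> real) \<Rightarrow> nat \<times> nat \<Rightarrow> real" where
  "Rone Z x = Z x / Z (fst x - 1, snd x)"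

definition Rtwo :: "(nat \<times> nat \<Rightarrow> real) \<Rightarrow> nat \<times> nat \<Rightarrow> real" where
  "Rtwo Z x = Z x / Z (fst x, snd x - 1)"

definition edge_var :: "(nat \<times> nat \<Rightarrow> real) \<Rightarrow> (int \<Rightarrow> nat \<times> nat) \<Rightarrow> int \<Rightarrow> real" where
  "edge_var Z p k = (if horiz_step p k then Rone Z (p k) else Rtwo Z (p (k - 1)))"

definition (in prob_space) covariance :: "('a \<Rightarrow> real) \<Rightarrow> ('a \<Rightarrow> real) \<Rightarrow> real" where
  "covariance X Y = expectation (\<lambda>\<omega>. (X \<omega> - expectation X) * (Y \<omega> - expectation Y))"

end

theory Submission
  imports Defs
begin

text \<open>Along any segment of a down-right path, log Z telescopes into the sum of the logarithms of the
  edge variables of the segment, and by the down-right property these are independent, with the law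
  of R1 on horizontal and of R2 on vertical edges. The path down the vertical axis and along the
  horizontal axis gives log Z(0,n) = S_W and log Z(m,0) = S_S; the path through (0,n), (m,n) and (m,0)
  gives S_N and S_E, which are therefore uncorrelated. Part (a) is linearity of expectation for
  log Z(m,n) = S_W + S_N. For (b), S_W + S_N = S_S + S_E and Cov(S_N, S_E) = 0 give
  Cov(S_N, log Z(m,n)) = Cov(S_N, S_S), which identifies the cross term in
  Var(S_W + S_N) = Var S_W + 2 Cov(S_W, S_N) + Var S_N; (c) is the same argument with the two
  decompositions exchanged.\<close>

lemma pathw_pos:
  assumes "\<And>a b. 0 < h (a + 1, b)" and "\<And>a b. 0 < v (a, b + 1)"
  shows "0 < pathw h v x s"
proof (induction s arbitrary: x)
  case (Cons b s)
  then show ?case using assms by (cases b) auto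
qed simp

lemma finite_uppaths: "finite (uppaths x)"
proof (rule finite_subset)
  show "uppaths x \<subseteq> {s. set s \<subseteq> UNIV \<and> length s = fst x + snd x}"
    by (auto simp: uppaths_def)
qed (rule finite_lists_length_eq, simp)

lemma Zpf_pos:
  assumes "\<And>z. 1 \<le> fst z \<Longrightarrow> 1 \<le> snd z \<Longrightarrow> 0 < Y1 z"
    and "\<And>z. 1 \<le> fst z \<Longrightarrow> 1 \<le> snd z \<Longrightarrow> 0 < Y2 z"
    and "\<And>i. 1 \<le> i \<Longrightarrow> 0 < R1 i"
    and "\<And>j. 1 \<le> j \<Longrightarrow> 0 < R2 j"
  shows "0 < Zpf Y1 Y2 R1 R2 x"
proof -
  have "0 < hw Y1 R1 (a + 1, b)" for a b using assms(1,3) by (auto simp: hw_def)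
  moreover have "0 < vw Y2 R2 (a, b + 1)" for a b using assms(2,4) by (auto simp: vw_def)
  ultimately have pos: "0 < pathw (hw Y1 R1) (vw Y2 R2) (0, 0) s" for s
    by (rule pathw_pos)
  have "replicate (fst x) True @ replicate (snd x) False \<in> uppaths x"
    by (simp add: uppaths_def)
  then show ?thesis
    unfolding Zpf_def using pos by (intro sum_pos2[OF finite_uppaths]) (auto intro: less_imp_le)
qed

lemma Zpf_origin: "Zpf Y1 Y2 R1 R2 (0, 0) = 1"
proof -
  have "uppaths (0, 0) = {[]}" by (auto simp: uppaths_def)
  then show ?thesis by (simp add: Zpf_def)
qed

text \<open>The down-right path that comes down the vertical axis to (0,n), runs east to (m,n), south to
  (m,0) and then east along the horizontal axis; index k = 0 is the point (0,n).\<close>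

definition corner_path :: "nat \<Rightarrow> nat \<Rightarrow> int \<Rightarrow> nat \<times> nat" where
  "corner_path m n k =
     (if k \<le> 0 then (0, nat (int n - k))
      else if k \<le> int m then (nat k, n)
      else if k \<le> int m + int n then (m, nat (int m + int n - k))
      else (nat (k - int n), 0))"

lemma down_right_corner_path: "down_right (corner_path m n)"
  unfolding down_right_def
proof
  fix k :: int
  consider "k < 0" | "0 \<le> k \<and> k < int m" | "int m \<le> k \<and> k < int m + int n" | "int m + int n \<le> k"
    by linarith
  then show "corner_path m n (k + 1) = (fst (corner_path m n k) + 1, snd (corner_path m n k)) \<or>
      fst (corner_path m n (k + 1)) = fst (corner_path m n k) \<and>
      snd (corner_path m n k) = snd (corner_path m n (k + 1)) + 1"
    by cases (auto simp: corner_path_def)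
qed

lemma horiz_step_corner_path_iff:
  "horiz_step (corner_path m n) k \<longleftrightarrow> 0 < k \<and> k \<le> int m \<or> int m + int n < k"
proof -
  consider "k \<le> 0" | "0 < k \<and> k \<le> int m" | "int m < k \<and> k \<le> int m + int n" | "int m + int n < k"
    by linarith
  then show ?thesis
    by cases (auto simp: horiz_step_def corner_path_def)
qed

lemma corner_path_vertices:
  "corner_path m n 0 = (0, n)"
  "corner_path m n (int m) = (m, n)"
  "int m + int n \<le> k \<Longrightarrow> corner_path m n k = (nat (k - int n), 0)"
  by (auto simp: corner_path_def)

lemma sum_int_telescope:
  fixes g :: "int \<Rightarrow> 'b::ab_group_add"
  assumes "a \<le> b"
  shows "(\<Sum>k\<in>{a<..b}. g k - g (k - 1)) = g b - g a"
  using assms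
proof (induction b rule: int_ge_induct)
  case (step b)
  have "{a<..b + 1} = insert (b + 1) {a<..b}" using step.hyps by auto
  then show ?case using step by simp
qed simp

lemma ln_edge_var_horizontal:
  assumes "\<And>x. 0 < f x" and "horiz_step p k"
  shows "ln (edge_var f p k) = ln (f (p k)) - ln (f (p (k - 1)))"
  using assms(2) dual_order.strict_implies_not_eq[OF assms(1)]
  by (simp add: edge_var_def Rone_def horiz_step_def ln_div assms(1))

lemma ln_edge_var_vertical:
  assumes "\<And>x. 0 < f x" and "down_right p" and "\<not> horiz_step p k"
  shows "ln (edge_var f p k) = ln (f (p (k - 1))) - ln (f (p k))"
proof -
  have "p (k - 1) = (fst (p k), snd (p k) + 1)"
    using assms(2,3) unfolding down_right_def horiz_step_def by (metis diff_add_cancel prod.collapse)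
  then show ?thesis using assms(3) dual_order.strict_implies_not_eq[OF assms(1)]
    by (simp add: edge_var_def Rtwo_def ln_div assms(1))
qed

lemma sum_ln_edge_var_horizontal:
  assumes "\<And>x. 0 < f x" and "a \<le> b" and "\<And>k. k \<in> {a<..b} \<Longrightarrow> horiz_step p k"
  shows "(\<Sum>k\<in>{a<..b}. ln (edge_var f p k)) = ln (f (p b)) - ln (f (p a))"
  using sum_int_telescope[OF assms(2), of "\<lambda>k. ln (f (p k))"] assms
  by (simp add: ln_edge_var_horizontal)

lemma sum_ln_edge_var_vertical:
  assumes "\<And>x. 0 < f x" and "down_right p" and "a \<le> b" and "\<And>k. k \<in> {a<..b} \<Longrightarrow> \<not> horiz_step p k"
  shows "(\<Sum>k\<in>{a<..b}. ln (edge_var f p k)) = ln (f (p a)) - ln (f (p b))"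
  using sum_int_telescope[OF assms(3), of "\<lambda>k. - ln (f (p k))"] assms
  by (simp add: ln_edge_var_vertical)

lemma distr_compose_eq:
  assumes "X \<in> measurable M N" "Y \<in> measurable M N" "distr M N X = distr M N Y"
    and "g \<in> measurable N L"
  shows "distr M L (\<lambda>\<omega>. g (X \<omega>)) = distr M L (\<lambda>\<omega>. g (Y \<omega>))"
  using distr_distr[OF assms(4,1)] distr_distr[OF assms(4,2)] assms(3) by (simp add: comp_def)

lemma identically_distributed_integral:
  fixes X Y :: "'a \<Rightarrow> real" and g :: "real \<Rightarrow> real"
  assumes "X \<in> borel_measurable M" "Y \<in> borel_measurable M" "distr M borel X = distr M borel Y"
    and "g \<in> borel_measurable borel"
  shows "integral\<^sup>L M (\<lambda>\<omega>. g (X \<omega>)) = integral\<^sup>L M (\<lambda>\<omega>. g (Y \<omega>))"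
    and "integrable M (\<lambda>\<omega>. g (X \<omega>)) \<longleftrightarrow> integrable M (\<lambda>\<omega>. g (Y \<omega>))"
  using integral_distr[OF assms(1,4)] integral_distr[OF assms(2,4)]
    integrable_distr_eq[OF assms(1,4)] integrable_distr_eq[OF assms(2,4)] assms(3)
  by auto

context prob_space
begin

definition square_integrable :: "('a \<Rightarrow> real) \<Rightarrow> bool" where
  "square_integrable X \<longleftrightarrow> X \<in> borel_measurable M \<and> integrable M (\<lambda>\<omega>. (X \<omega>)\<^sup>2)"

lemma square_integrable_integrable: "square_integrable X \<Longrightarrow> integrable M X"
  unfolding square_integrable_def by (blast intro: square_integrable_imp_integrable)

lemma square_integrable_mult:
  assumes "square_integrable X" "square_integrable Y"
  shows "integrable M (\<lambda>\<omega>. X \<omega> * Y \<omega>)"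
proof (rule Bochner_Integration.integrable_bound)
  show "integrable M (\<lambda>\<omega>. (X \<omega>)\<^sup>2 + (Y \<omega>)\<^sup>2)"
    using assms unfolding square_integrable_def by simp
  have "\<bar>a * b\<bar> \<le> a\<^sup>2 + b\<^sup>2" for a b :: real
  proof -
    have "2 * (\<bar>a\<bar> * \<bar>b\<bar>) \<le> a\<^sup>2 + b\<^sup>2"
      using sum_squares_bound[of "\<bar>a\<bar>" "\<bar>b\<bar>"] by simp
    moreover have "0 \<le> \<bar>a\<bar> * \<bar>b\<bar>" by simp
    ultimately show ?thesis unfolding abs_mult by linarith
  qed
  then show "AE \<omega> in M. norm (X \<omega> * Y \<omega>) \<le> norm ((X \<omega>)\<^sup>2 + (Y \<omega>)\<^sup>2)"
    by simp
qed (use assms in \<open>simp add: square_integrable_def borel_measurable_times\<close>)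

lemma square_integrable_add:
  assumes "square_integrable X" "square_integrable Y"
  shows "square_integrable (\<lambda>\<omega>. X \<omega> + Y \<omega>)"
proof -
  have "integrable M (\<lambda>\<omega>. (X \<omega>)\<^sup>2 + (Y \<omega>)\<^sup>2 + 2 * (X \<omega> * Y \<omega>))"
    using assms square_integrable_mult[OF assms] unfolding square_integrable_def by simp
  then show ?thesis
    using assms by (simp add: square_integrable_def power2_sum ac_simps borel_measurable_add)
qed

lemma square_integrable_sum:
  "finite K \<Longrightarrow> (\<And>k. k \<in> K \<Longrightarrow> square_integrable (X k)) \<Longrightarrow>
    square_integrable (\<lambda>\<omega>. \<Sum>k\<in>K. X k \<omega>)"
proof (induction K rule: finite_induct)
  case empty
  then show ?case by (simp add: square_integrable_def)
next
  case (insert k K)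
  then show ?case by (simp add: square_integrable_add)
qed

lemma covariance_eq:
  assumes "square_integrable X" "square_integrable Y"
  shows "covariance X Y = expectation (\<lambda>\<omega>. X \<omega> * Y \<omega>) - expectation X * expectation Y"
  using square_integrable_mult[OF assms]
    square_integrable_integrable[OF assms(1)] square_integrable_integrable[OF assms(2)]
  by (simp add: covariance_def algebra_simps prob_space)

lemma covariance_commute: "covariance X Y = covariance Y X"
  by (simp add: covariance_def mult.commute)

lemma variance_eq_covariance: "variance X = covariance X X"
  by (simp add: covariance_def power2_eq_square)

lemma covariance_add_left:
  assumes "square_integrable X" "square_integrable Y" "square_integrable W"
  shows "covariance (\<lambda>\<omega>. X \<omega> + Y \<omega>) W = covariance X W + covariance Y W"
  using assms square_integrable_mult[OF assms(1,3)] square_integrable_mult[OF assms(2,3)]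
    square_integrable_integrable[OF assms(1)] square_integrable_integrable[OF assms(2)]
  by (simp add: covariance_eq square_integrable_add distrib_right algebra_simps)

lemma covariance_add_right:
  assumes "square_integrable W" "square_integrable X" "square_integrable Y"
  shows "covariance W (\<lambda>\<omega>. X \<omega> + Y \<omega>) = covariance W X + covariance W Y"
  using covariance_add_left[OF assms(2,3,1)] by (simp add: covariance_commute)

lemma covariance_sum_left:
  assumes "finite K" "\<And>k. k \<in> K \<Longrightarrow> square_integrable (X k)" "square_integrable W"
  shows "covariance (\<lambda>\<omega>. \<Sum>k\<in>K. X k \<omega>) W = (\<Sum>k\<in>K. covariance (X k) W)"
  using assms
proof (induction K rule: finite_induct)
  case empty
  then show ?case by (simp add: covariance_def prob_space)
next
  case (insert k K)
  then show ?case by (simp add: covariance_add_left square_integrable_sum)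
qed

lemma variance_add:
  assumes "square_integrable X" "square_integrable Y"
  shows "variance (\<lambda>\<omega>. X \<omega> + Y \<omega>) = variance X + 2 * covariance X Y + variance Y"
  using assms
  by (simp add: variance_eq_covariance covariance_add_left covariance_add_right
      square_integrable_add covariance_commute[of Y X])

lemma variance_of_two_decompositions:
  assumes "square_integrable W" "square_integrable N" "square_integrable S" "square_integrable E"
    and split: "\<And>\<omega>. W \<omega> + N \<omega> = S \<omega> + E \<omega>" and uncorrelated: "covariance N E = 0"
  shows "variance (\<lambda>\<omega>. W \<omega> + N \<omega>) = variance W - variance N + 2 * covariance N S"
proof -
  have "covariance N (\<lambda>\<omega>. W \<omega> + N \<omega>) = covariance N W + variance N"
    using assms(1,2) by (simp add: covariance_add_right variance_eq_covariance)
  moreover have "covariance N (\<lambda>\<omega>. W \<omega> + N \<omega>) = covariance N S"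
    using assms(2-4) uncorrelated by (simp add: split covariance_add_right)
  ultimately show ?thesis
    using variance_add[OF assms(1,2)] covariance_commute[of W N] by simp
qed

lemma covariance_indep_vars:
  assumes indep: "indep_vars (\<lambda>_. borel) X I" and "i \<in> I" "j \<in> I" "i \<noteq> j"
    and "integrable M (X i)" "integrable M (X j)"
  shows "covariance (X i) (X j) = 0"
proof -
  define C where "C = (\<lambda>k \<omega>. X k \<omega> - expectation (X k))"
  have "indep_vars (\<lambda>_. borel) C I"
    unfolding C_def by (rule indep_vars_compose2[OF indep]) simp
  then have "indep_vars (\<lambda>_. borel) C {i, j}"
    by (rule indep_vars_subset) (use assms in simp)
  moreover have "integrable M (C k)" "expectation (C k) = 0" if "k \<in> {i, j}" for k
    using that assms(5,6) by (auto simp: C_def prob_space)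
  ultimately have "expectation (\<lambda>\<omega>. \<Prod>k\<in>{i, j}. C k \<omega>) = (\<Prod>k\<in>{i, j}. expectation (C k))"
    by (intro indep_vars_lebesgue_integral) auto
  also have "\<dots> = 0"
    using \<open>\<And>k. k \<in> {i, j} \<Longrightarrow> expectation (C k) = 0\<close> assms(4) by simp
  finally show ?thesis
    using assms(4) by (simp add: covariance_def C_def)
qed

lemma variance_sum_indep_vars:
  assumes indep: "indep_vars (\<lambda>_. borel) X I" and "finite K" "K \<subseteq> I"
    and "\<And>k. k \<in> K \<Longrightarrow> square_integrable (X k)"
  shows "variance (\<lambda>\<omega>. \<Sum>k\<in>K. X k \<omega>) = (\<Sum>k\<in>K. variance (X k))"
proof -
  have "covariance (X k) (\<lambda>\<omega>. \<Sum>l\<in>K. X l \<omega>) = variance (X k)" if "k \<in> K" for k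
  proof -
    have "covariance (X k) (\<lambda>\<omega>. \<Sum>l\<in>K. X l \<omega>) = (\<Sum>l\<in>K. covariance (X l) (X k))"
      using that assms by (simp add: covariance_commute[of "X k"] covariance_sum_left)
    also have "\<dots> = (\<Sum>l\<in>K. if l = k then variance (X k) else 0)"
      using that assms
      by (intro sum.cong refl)
         (auto simp: variance_eq_covariance intro!: covariance_indep_vars[OF indep] square_integrable_integrable)
    finally show ?thesis using that \<open>finite K\<close> by simp
  qed
  then show ?thesis
    using assms by (simp add: variance_eq_covariance[of "\<lambda>\<omega>. \<Sum>k\<in>K. X k \<omega>"]
        covariance_sum_left square_integrable_sum)
qed

lemma covariance_sum_indep_vars_disjoint:
  assumes indep: "indep_vars (\<lambda>_. borel) X I" and "finite K" "finite L" "K \<subseteq> I" "L \<subseteq> I"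
    and "K \<inter> L = {}" and "\<And>k. k \<in> K \<union> L \<Longrightarrow> square_integrable (X k)"
  shows "covariance (\<lambda>\<omega>. \<Sum>k\<in>K. X k \<omega>) (\<lambda>\<omega>. \<Sum>l\<in>L. X l \<omega>) = 0"
proof -
  have "covariance (X k) (\<lambda>\<omega>. \<Sum>l\<in>L. X l \<omega>) = 0" if "k \<in> K" for k
  proof -
    have "covariance (X k) (\<lambda>\<omega>. \<Sum>l\<in>L. X l \<omega>) = (\<Sum>l\<in>L. covariance (X l) (X k))"
      using that assms by (simp add: covariance_commute[of "X k"] covariance_sum_left)
    also have "\<dots> = 0"
      using that assms
      by (intro sum.neutral ballI covariance_indep_vars[OF indep] square_integrable_integrable) auto
    finally show ?thesis .
  qed
  then show ?thesis
    using assms by (simp add: covariance_sum_left square_integrable_sum)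
qed

lemma identically_distributed_moments:
  assumes "X \<in> borel_measurable M" "Y \<in> borel_measurable M" "distr M borel X = distr M borel Y"
  shows "integrable M X \<longleftrightarrow> integrable M Y"
    and "expectation X = expectation Y"
    and "square_integrable X \<longleftrightarrow> square_integrable Y"
    and "variance X = variance Y"
proof -
  note transfer = identically_distributed_integral[OF assms]
  show "integrable M X \<longleftrightarrow> integrable M Y" and mean: "expectation X = expectation Y"
    using transfer[of "\<lambda>x. x"] by simp_all
  show "square_integrable X \<longleftrightarrow> square_integrable Y"
    using transfer(2)[of "\<lambda>x. x\<^sup>2"] assms(1,2) by (simp add: square_integrable_def)
  show "variance X = variance Y"
    using transfer(1)[of "\<lambda>x. (x - expectation Y)\<^sup>2"] by (simp add: mean)
qed

lemma expectation_sum_identically_distributed: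
  assumes "finite K" "\<And>k. k \<in> K \<Longrightarrow> X k \<in> borel_measurable M" "Y \<in> borel_measurable M"
    and "\<And>k. k \<in> K \<Longrightarrow> distr M borel (X k) = distr M borel Y" and "integrable M Y"
  shows "integrable M (\<lambda>\<omega>. \<Sum>k\<in>K. X k \<omega>)"
    and "expectation (\<lambda>\<omega>. \<Sum>k\<in>K. X k \<omega>) = real (card K) * expectation Y"
proof -
  have X: "integrable M (X k) \<and> expectation (X k) = expectation Y" if "k \<in> K" for k
    using identically_distributed_moments(1,2)[OF assms(2)[OF that] assms(3) assms(4)[OF that]] assms(5)
    by simp
  then show "integrable M (\<lambda>\<omega>. \<Sum>k\<in>K. X k \<omega>)"
    by (intro Bochner_Integration.integrable_sum) simp
  show "expectation (\<lambda>\<omega>. \<Sum>k\<in>K. X k \<omega>) = real (card K) * expectation Y"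
    using X assms(1) by (simp add: Bochner_Integration.integral_sum)
qed

lemma variance_sum_iid:
  assumes indep: "indep_vars (\<lambda>_. borel) X I" and "finite K" "K \<subseteq> I" "Y \<in> borel_measurable M"
    and "\<And>k. k \<in> K \<Longrightarrow> distr M borel (X k) = distr M borel Y" and "square_integrable Y"
  shows "square_integrable (\<lambda>\<omega>. \<Sum>k\<in>K. X k \<omega>)"
    and "variance (\<lambda>\<omega>. \<Sum>k\<in>K. X k \<omega>) = real (card K) * variance Y"
proof -
  have L2: "square_integrable (X k) \<and> variance (X k) = variance Y" if "k \<in> K" for k
  proof -
    have "X k \<in> borel_measurable M"
      using indep that assms(3) by (auto simp: indep_vars_def)
    then show ?thesis
      using identically_distributed_moments(3,4)[OF _ assms(4) assms(5)[OF that]] assms(6) by simp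
  qed
  show "square_integrable (\<lambda>\<omega>. \<Sum>k\<in>K. X k \<omega>)"
    using L2 by (intro square_integrable_sum[OF assms(2)]) simp
  show "variance (\<lambda>\<omega>. \<Sum>k\<in>K. X k \<omega>) = real (card K) * variance Y"
    using variance_sum_indep_vars[OF indep assms(2,3)] L2 by simp
qed

end

locale down_right_polymer = prob_space M for M :: "'a measure" +
  fixes Z :: "'a \<Rightarrow> nat \<times> nat \<Rightarrow> real" and R1 R2 :: "'a \<Rightarrow> real"
  assumes Z_pos: "\<And>\<omega> x. 0 < Z \<omega> x"
    and Z_origin: "\<And>\<omega>. Z \<omega> (0, 0) = 1"
    and R1_measurable: "R1 \<in> borel_measurable M"
    and R2_measurable: "R2 \<in> borel_measurable M"
    and down_right_property: "\<And>p. down_right p \<Longrightarrow>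
        indep_vars (\<lambda>_. borel) (\<lambda>k \<omega>. edge_var (Z \<omega>) p k) UNIV
        \<and> (\<forall>k. distr M borel (\<lambda>\<omega>. edge_var (Z \<omega>) p k)
               = (if horiz_step p k then distr M borel R1 else distr M borel R2))"
begin

lemma edge_var_measurable:
  "down_right p \<Longrightarrow> (\<lambda>\<omega>. edge_var (Z \<omega>) p k) \<in> borel_measurable M"
  using down_right_property by (simp add: indep_vars_def)

lemma indep_vars_ln_edge_var:
  "down_right p \<Longrightarrow> indep_vars (\<lambda>_. borel) (\<lambda>k \<omega>. ln (edge_var (Z \<omega>) p k)) UNIV"
  by (rule indep_vars_compose2[OF conjunct1[OF down_right_property]]) measurable

lemma ln_edge_sum_moments:
  assumes "down_right p" "finite K" "R \<in> borel_measurable M"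
    and same: "\<And>k. k \<in> K \<Longrightarrow> distr M borel (\<lambda>\<omega>. edge_var (Z \<omega>) p k) = distr M borel R"
  defines "S \<equiv> \<lambda>\<omega>. \<Sum>k\<in>K. ln (edge_var (Z \<omega>) p k)"
  shows "integrable M (\<lambda>\<omega>. ln (R \<omega>)) \<Longrightarrow> integrable M S"
    and "integrable M (\<lambda>\<omega>. ln (R \<omega>)) \<Longrightarrow>
      expectation S = real (card K) * expectation (\<lambda>\<omega>. ln (R \<omega>))"
    and "square_integrable (\<lambda>\<omega>. ln (R \<omega>)) \<Longrightarrow> square_integrable S"
    and "square_integrable (\<lambda>\<omega>. ln (R \<omega>)) \<Longrightarrow>
      variance S = real (card K) * variance (\<lambda>\<omega>. ln (R \<omega>))"
proof -
  have same_ln: "distr M borel (\<lambda>\<omega>. ln (edge_var (Z \<omega>) p k)) = distr M borel (\<lambda>\<omega>. ln (R \<omega>))"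
    if "k \<in> K" for k
    by (rule distr_compose_eq[OF edge_var_measurable[OF assms(1)] assms(3) same[OF that]]) simp
  have meas: "(\<lambda>\<omega>. ln (edge_var (Z \<omega>) p k)) \<in> borel_measurable M"
    "(\<lambda>\<omega>. ln (R \<omega>)) \<in> borel_measurable M" for k
    using edge_var_measurable[OF assms(1)] assms(3) by simp_all
  note indep = indep_vars_ln_edge_var[OF assms(1)]
  show "integrable M (\<lambda>\<omega>. ln (R \<omega>)) \<Longrightarrow> integrable M S"
    unfolding S_def by (rule expectation_sum_identically_distributed(1)[OF assms(2) meas same_ln])
  show "integrable M (\<lambda>\<omega>. ln (R \<omega>)) \<Longrightarrow>
      expectation S = real (card K) * expectation (\<lambda>\<omega>. ln (R \<omega>))"
    unfolding S_def by (rule expectation_sum_identically_distributed(2)[OF assms(2) meas same_ln])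
  show "square_integrable (\<lambda>\<omega>. ln (R \<omega>)) \<Longrightarrow> square_integrable S"
    unfolding S_def by (rule variance_sum_iid(1)[OF indep assms(2) _ meas(2) same_ln]) simp
  show "square_integrable (\<lambda>\<omega>. ln (R \<omega>)) \<Longrightarrow>
      variance S = real (card K) * variance (\<lambda>\<omega>. ln (R \<omega>))"
    unfolding S_def by (rule variance_sum_iid(2)[OF indep assms(2) _ meas(2) same_ln]) simp
qed

lemma horizontal_segment_moments:
  assumes "down_right p" "a \<le> b" and horizontal: "\<And>k. k \<in> {a<..b} \<Longrightarrow> horiz_step p k"
  defines "S \<equiv> \<lambda>\<omega>. ln (Z \<omega> (p b)) - ln (Z \<omega> (p a))"
  shows "integrable M (\<lambda>\<omega>. ln (R1 \<omega>)) \<Longrightarrow> integrable M S"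
    and "integrable M (\<lambda>\<omega>. ln (R1 \<omega>)) \<Longrightarrow>
      expectation S = real (nat (b - a)) * expectation (\<lambda>\<omega>. ln (R1 \<omega>))"
    and "square_integrable (\<lambda>\<omega>. ln (R1 \<omega>)) \<Longrightarrow> square_integrable S"
    and "square_integrable (\<lambda>\<omega>. ln (R1 \<omega>)) \<Longrightarrow>
      variance S = real (nat (b - a)) * variance (\<lambda>\<omega>. ln (R1 \<omega>))"
proof -
  have S_eq: "S = (\<lambda>\<omega>. \<Sum>k\<in>{a<..b}. ln (edge_var (Z \<omega>) p k))"
    unfolding S_def using sum_ln_edge_var_horizontal[OF Z_pos assms(2) horizontal] by simp
  have "distr M borel (\<lambda>\<omega>. edge_var (Z \<omega>) p k) = distr M borel R1" if "k \<in> {a<..b}" for k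
    using down_right_property[OF assms(1)] horizontal[OF that] by simp
  from ln_edge_sum_moments[OF assms(1) finite_greaterThanAtMost_int R1_measurable this]
  show "integrable M (\<lambda>\<omega>. ln (R1 \<omega>)) \<Longrightarrow> integrable M S"
    and "integrable M (\<lambda>\<omega>. ln (R1 \<omega>)) \<Longrightarrow>
      expectation S = real (nat (b - a)) * expectation (\<lambda>\<omega>. ln (R1 \<omega>))"
    and "square_integrable (\<lambda>\<omega>. ln (R1 \<omega>)) \<Longrightarrow> square_integrable S"
    and "square_integrable (\<lambda>\<omega>. ln (R1 \<omega>)) \<Longrightarrow>
      variance S = real (nat (b - a)) * variance (\<lambda>\<omega>. ln (R1 \<omega>))"
    unfolding S_eq by simp_all
qed

lemma vertical_segment_moments:
  assumes "down_right p" "a \<le> b" and vertical: "\<And>k. k \<in> {a<..b} \<Longrightarrow> \<not> horiz_step p k"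
  defines "S \<equiv> \<lambda>\<omega>. ln (Z \<omega> (p a)) - ln (Z \<omega> (p b))"
  shows "integrable M (\<lambda>\<omega>. ln (R2 \<omega>)) \<Longrightarrow> integrable M S"
    and "integrable M (\<lambda>\<omega>. ln (R2 \<omega>)) \<Longrightarrow>
      expectation S = real (nat (b - a)) * expectation (\<lambda>\<omega>. ln (R2 \<omega>))"
    and "square_integrable (\<lambda>\<omega>. ln (R2 \<omega>)) \<Longrightarrow> square_integrable S"
    and "square_integrable (\<lambda>\<omega>. ln (R2 \<omega>)) \<Longrightarrow>
      variance S = real (nat (b - a)) * variance (\<lambda>\<omega>. ln (R2 \<omega>))"
proof -
  have S_eq: "S = (\<lambda>\<omega>. \<Sum>k\<in>{a<..b}. ln (edge_var (Z \<omega>) p k))"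
    unfolding S_def using sum_ln_edge_var_vertical[OF Z_pos assms(1,2) vertical] by simp
  have "distr M borel (\<lambda>\<omega>. edge_var (Z \<omega>) p k) = distr M borel R2" if "k \<in> {a<..b}" for k
    using down_right_property[OF assms(1)] vertical[OF that] by simp
  from ln_edge_sum_moments[OF assms(1) finite_greaterThanAtMost_int R2_measurable this]
  show "integrable M (\<lambda>\<omega>. ln (R2 \<omega>)) \<Longrightarrow> integrable M S"
    and "integrable M (\<lambda>\<omega>. ln (R2 \<omega>)) \<Longrightarrow>
      expectation S = real (nat (b - a)) * expectation (\<lambda>\<omega>. ln (R2 \<omega>))"
    and "square_integrable (\<lambda>\<omega>. ln (R2 \<omega>)) \<Longrightarrow> square_integrable S"
    and "square_integrable (\<lambda>\<omega>. ln (R2 \<omega>)) \<Longrightarrow>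
      variance S = real (nat (b - a)) * variance (\<lambda>\<omega>. ln (R2 \<omega>))"
    unfolding S_eq by simp_all
qed

lemma square_integrable_ln_edge_var:
  assumes "down_right p"
    and "square_integrable (\<lambda>\<omega>. ln (R1 \<omega>))" "square_integrable (\<lambda>\<omega>. ln (R2 \<omega>))"
  shows "square_integrable (\<lambda>\<omega>. ln (edge_var (Z \<omega>) p k))"
  using ln_edge_sum_moments(3)[OF assms(1), of "{k}" R1] ln_edge_sum_moments(3)[OF assms(1), of "{k}" R2]
    down_right_property[OF assms(1)] assms(2,3) R1_measurable R2_measurable
  by (cases "horiz_step p k") auto

lemma covariance_horizontal_vertical_segments:
  assumes "down_right p" "a \<le> b" "b \<le> c"
    and horizontal: "\<And>k. k \<in> {a<..b} \<Longrightarrow> horiz_step p k"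
    and vertical: "\<And>k. k \<in> {b<..c} \<Longrightarrow> \<not> horiz_step p k"
    and "square_integrable (\<lambda>\<omega>. ln (R1 \<omega>))" "square_integrable (\<lambda>\<omega>. ln (R2 \<omega>))"
  shows "covariance (\<lambda>\<omega>. ln (Z \<omega> (p b)) - ln (Z \<omega> (p a))) (\<lambda>\<omega>. ln (Z \<omega> (p b)) - ln (Z \<omega> (p c))) = 0"
proof -
  have "covariance (\<lambda>\<omega>. \<Sum>k\<in>{a<..b}. ln (edge_var (Z \<omega>) p k))
      (\<lambda>\<omega>. \<Sum>k\<in>{b<..c}. ln (edge_var (Z \<omega>) p k)) = 0"
    using assms(1,6,7)
    by (intro covariance_sum_indep_vars_disjoint[OF indep_vars_ln_edge_var])
       (auto intro: square_integrable_ln_edge_var)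
  then show ?thesis
    using sum_ln_edge_var_horizontal[OF Z_pos assms(2) horizontal]
      sum_ln_edge_var_vertical[OF Z_pos assms(1,3) vertical]
    by simp
qed

lemma expectation_ln_Z:
  assumes "integrable M (\<lambda>\<omega>. ln (R1 \<omega>))" "integrable M (\<lambda>\<omega>. ln (R2 \<omega>))"
  shows "expectation (\<lambda>\<omega>. ln (Z \<omega> (m, n)))
    = real m * expectation (\<lambda>\<omega>. ln (R1 \<omega>)) + real n * expectation (\<lambda>\<omega>. ln (R2 \<omega>))"
proof -
  have west: "integrable M (\<lambda>\<omega>. ln (Z \<omega> (0, n)))"
    "expectation (\<lambda>\<omega>. ln (Z \<omega> (0, n))) = real n * expectation (\<lambda>\<omega>. ln (R2 \<omega>))"
    using vertical_segment_moments(1,2)[OF down_right_corner_path, of 0 "int n" 0 n] assms(2)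
    by (simp_all add: horiz_step_corner_path_iff corner_path_vertices Z_origin)
  have north: "integrable M (\<lambda>\<omega>. ln (Z \<omega> (m, n)) - ln (Z \<omega> (0, n)))"
    "expectation (\<lambda>\<omega>. ln (Z \<omega> (m, n)) - ln (Z \<omega> (0, n))) = real m * expectation (\<lambda>\<omega>. ln (R1 \<omega>))"
    using horizontal_segment_moments(1,2)[OF down_right_corner_path, of 0 "int m" m n] assms(1)
    by (simp_all add: horiz_step_corner_path_iff corner_path_vertices)
  have "expectation (\<lambda>\<omega>. ln (Z \<omega> (m, n)))
      = expectation (\<lambda>\<omega>. ln (Z \<omega> (0, n)) + (ln (Z \<omega> (m, n)) - ln (Z \<omega> (0, n))))"
    by simp
  also have "\<dots> = expectation (\<lambda>\<omega>. ln (Z \<omega> (0, n)))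
      + expectation (\<lambda>\<omega>. ln (Z \<omega> (m, n)) - ln (Z \<omega> (0, n)))"
    by (rule Bochner_Integration.integral_add[OF west(1) north(1)])
  finally show ?thesis
    using west(2) north(2) by simp
qed

lemma variance_ln_Z:
  assumes "integrable M (\<lambda>\<omega>. (ln (R1 \<omega>))\<^sup>2)" "integrable M (\<lambda>\<omega>. (ln (R2 \<omega>))\<^sup>2)"
  shows "variance (\<lambda>\<omega>. ln (Z \<omega> (m, n)))
      = - real m * variance (\<lambda>\<omega>. ln (R1 \<omega>)) + real n * variance (\<lambda>\<omega>. ln (R2 \<omega>))
        + 2 * covariance (\<lambda>\<omega>. ln (Z \<omega> (m, n)) - ln (Z \<omega> (0, n))) (\<lambda>\<omega>. ln (Z \<omega> (m, 0)))"
    and "variance (\<lambda>\<omega>. ln (Z \<omega> (m, n)))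
      = real m * variance (\<lambda>\<omega>. ln (R1 \<omega>)) - real n * variance (\<lambda>\<omega>. ln (R2 \<omega>))
        + 2 * covariance (\<lambda>\<omega>. ln (Z \<omega> (m, n)) - ln (Z \<omega> (m, 0))) (\<lambda>\<omega>. ln (Z \<omega> (0, n)))"
proof -
  have L2: "square_integrable (\<lambda>\<omega>. ln (R1 \<omega>))" "square_integrable (\<lambda>\<omega>. ln (R2 \<omega>))"
    using assms R1_measurable R2_measurable by (simp_all add: square_integrable_def)
  define W N S E where
    "W = (\<lambda>\<omega>. ln (Z \<omega> (0, n)))" and "N = (\<lambda>\<omega>. ln (Z \<omega> (m, n)) - ln (Z \<omega> (0, n)))" and
    "S = (\<lambda>\<omega>. ln (Z \<omega> (m, 0)))" and "E = (\<lambda>\<omega>. ln (Z \<omega> (m, n)) - ln (Z \<omega> (m, 0)))"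
  have W: "square_integrable W" "variance W = real n * variance (\<lambda>\<omega>. ln (R2 \<omega>))"
    using vertical_segment_moments(3,4)[OF down_right_corner_path, of 0 "int n" 0 n] L2
    by (simp_all add: W_def horiz_step_corner_path_iff corner_path_vertices Z_origin)
  have N: "square_integrable N" "variance N = real m * variance (\<lambda>\<omega>. ln (R1 \<omega>))"
    using horizontal_segment_moments(3,4)[OF down_right_corner_path, of 0 "int m" m n] L2
    by (simp_all add: N_def horiz_step_corner_path_iff corner_path_vertices)
  have S: "square_integrable S" "variance S = real m * variance (\<lambda>\<omega>. ln (R1 \<omega>))"
    using horizontal_segment_moments(3,4)[OF down_right_corner_path, of "int n" "int n + int m" 0 n] L2
    by (simp_all add: S_def horiz_step_corner_path_iff corner_path_vertices Z_origin)
  have E: "square_integrable E" "variance E = real n * variance (\<lambda>\<omega>. ln (R2 \<omega>))"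
    using vertical_segment_moments(3,4)[OF down_right_corner_path, of "int m" "int m + int n" m n] L2
    by (simp_all add: E_def horiz_step_corner_path_iff corner_path_vertices)
  have NE: "covariance N E = 0"
    using covariance_horizontal_vertical_segments[OF down_right_corner_path, of 0 "int m" "int m + int n" m n] L2
    by (simp add: N_def E_def horiz_step_corner_path_iff corner_path_vertices)
  have split: "W \<omega> + N \<omega> = S \<omega> + E \<omega>" for \<omega>
    by (simp add: W_def N_def S_def E_def)
  have "variance (\<lambda>\<omega>. ln (Z \<omega> (m, n))) = variance (\<lambda>\<omega>. W \<omega> + N \<omega>)"
    "variance (\<lambda>\<omega>. ln (Z \<omega> (m, n))) = variance (\<lambda>\<omega>. S \<omega> + E \<omega>)"
    by (simp_all add: W_def N_def S_def E_def)
  note variance_ln_Z = this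
  show "variance (\<lambda>\<omega>. ln (Z \<omega> (m, n)))
      = - real m * variance (\<lambda>\<omega>. ln (R1 \<omega>)) + real n * variance (\<lambda>\<omega>. ln (R2 \<omega>))
        + 2 * covariance (\<lambda>\<omega>. ln (Z \<omega> (m, n)) - ln (Z \<omega> (0, n))) (\<lambda>\<omega>. ln (Z \<omega> (m, 0)))"
    unfolding N_def[symmetric] S_def[symmetric] variance_ln_Z(1)
    using variance_of_two_decompositions[OF W(1) N(1) S(1) E(1) split NE] W(2) N(2) by linarith
  show "variance (\<lambda>\<omega>. ln (Z \<omega> (m, n)))
      = real m * variance (\<lambda>\<omega>. ln (R1 \<omega>)) - real n * variance (\<lambda>\<omega>. ln (R2 \<omega>))
        + 2 * covariance (\<lambda>\<omega>. ln (Z \<omega> (m, n)) - ln (Z \<omega> (m, 0))) (\<lambda>\<omega>. ln (Z \<omega> (0, n)))"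
    unfolding E_def[symmetric] W_def[symmetric] variance_ln_Z(2)
    using variance_of_two_decompositions[OF S(1) E(1) W(1) N(1) split[symmetric]]
      NE covariance_commute[of E N] S(2) E(2)
    by linarith
qed

end

theorem lemma2p4:
  fixes M :: "'a measure"
    and Y1 Y2 :: "nat \<times> nat \<Rightarrow> 'a \<Rightarrow> real"
    and R1 R2 :: "nat \<Rightarrow> 'a \<Rightarrow> real"
    and Z :: "'a \<Rightarrow> nat \<times> nat \<Rightarrow> real"
    and m n :: nat
  assumes prob: "prob_space M"
    and Z_def: "\<And>\<omega>. Z \<omega> = Zpf (\<lambda>z. Y1 z \<omega>) (\<lambda>z. Y2 z \<omega>) (\<lambda>i. R1 i \<omega>) (\<lambda>j. R2 j \<omega>)"
    and posY1: "\<And>z \<omega>. fst z \<ge> 1 \<Longrightarrow> snd z \<ge> 1 \<Longrightarrow> Y1 z \<omega> > 0"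
    and posY2: "\<And>z \<omega>. fst z \<ge> 1 \<Longrightarrow> snd z \<ge> 1 \<Longrightarrow> Y2 z \<omega> > 0"
    and posR1: "\<And>i \<omega>. i \<ge> 1 \<Longrightarrow> R1 i \<omega> > 0"
    and posR2: "\<And>j \<omega>. j \<ge> 1 \<Longrightarrow> R2 j \<omega> > 0"
    and indep: "prob_space.indep_vars M (\<lambda>_. (borel :: (real \<times> real) measure))
        (\<lambda>e \<omega>. case e of Inl z \<Rightarrow> (Y1 z \<omega>, Y2 z \<omega>)
                        | Inr (Inl i) \<Rightarrow> (R1 i \<omega>, 0)
                        | Inr (Inr j) \<Rightarrow> (R2 j \<omega>, 0))
        (Inl ` {z. fst z \<ge> 1 \<and> snd z \<ge> 1} \<union> Inr ` Inl ` {1..} \<union> Inr ` Inr ` {1..})"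
    and identY: "\<And>z. fst z \<ge> 1 \<Longrightarrow> snd z \<ge> 1 \<Longrightarrow>
        distr M borel (\<lambda>\<omega>. (Y1 z \<omega>, Y2 z \<omega>)) = distr M borel (\<lambda>\<omega>. (Y1 (1,1) \<omega>, Y2 (1,1) \<omega>))"
    and identR1: "\<And>i. i \<ge> 1 \<Longrightarrow> distr M borel (R1 i) = distr M borel (R1 1)"
    and identR2: "\<And>j. j \<ge> 1 \<Longrightarrow> distr M borel (R2 j) = distr M borel (R2 1)"
    and down_right_property: "\<And>p. down_right p \<Longrightarrow>
        prob_space.indep_vars M (\<lambda>_. (borel :: real measure)) (\<lambda>k \<omega>. edge_var (Z \<omega>) p k) UNIV
        \<and> (\<forall>k. distr M borel (\<lambda>\<omega>. edge_var (Z \<omega>) p k)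
               = (if horiz_step p k then distr M borel (R1 1) else distr M borel (R2 1)))"
  shows "(integrable M (\<lambda>\<omega>. ln (R1 1 \<omega>)) \<and> integrable M (\<lambda>\<omega>. ln (R2 1 \<omega>)) \<longrightarrow>
            prob_space.expectation M (\<lambda>\<omega>. ln (Z \<omega> (m, n)))
              = real m * prob_space.expectation M (\<lambda>\<omega>. ln (R1 1 \<omega>))
                + real n * prob_space.expectation M (\<lambda>\<omega>. ln (R2 1 \<omega>)))
       \<and> (integrable M (\<lambda>\<omega>. (ln (R1 1 \<omega>))\<^sup>2) \<and> integrable M (\<lambda>\<omega>. (ln (R2 1 \<omega>))\<^sup>2) \<longrightarrow>
            prob_space.variance M (\<lambda>\<omega>. ln (Z \<omega> (m, n)))
              = - real m * prob_space.variance M (\<lambda>\<omega>. ln (R1 1 \<omega>))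
                + real n * prob_space.variance M (\<lambda>\<omega>. ln (R2 1 \<omega>))
                + 2 * prob_space.covariance M
                        (\<lambda>\<omega>. ln (Z \<omega> (m, n)) - ln (Z \<omega> (0, n)))
                        (\<lambda>\<omega>. ln (Z \<omega> (m, 0)))
          \<and> prob_space.variance M (\<lambda>\<omega>. ln (Z \<omega> (m, n)))
              = real m * prob_space.variance M (\<lambda>\<omega>. ln (R1 1 \<omega>))
                - real n * prob_space.variance M (\<lambda>\<omega>. ln (R2 1 \<omega>))
                + 2 * prob_space.covariance M
                        (\<lambda>\<omega>. ln (Z \<omega> (m, n)) - ln (Z \<omega> (m, 0)))
                        (\<lambda>\<omega>. ln (Z \<omega> (0, n))))"
proof -
  interpret prob_space M by (rule prob)
  have "random_variable borel (\<lambda>\<omega>. (R1 1 \<omega>, 0::real))" "random_variable borel (\<lambda>\<omega>. (R2 1 \<omega>, 0::real))"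
    using indep unfolding indep_vars_def by force+
  from this[folded borel_prod, THEN measurable_fst']
  have "R1 1 \<in> borel_measurable M" "R2 1 \<in> borel_measurable M"
    by simp_all
  moreover have "0 < Z \<omega> x" for \<omega> x
    unfolding Z_def by (rule Zpf_pos) (auto intro: posY1 posY2 posR1 posR2)
  ultimately interpret down_right_polymer M Z "R1 1" "R2 1"
    using down_right_property by unfold_locales (simp_all add: Z_def Zpf_origin)
  show ?thesis
    using expectation_ln_Z variance_ln_Z by blast
qed

end
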